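(* Let $G$ be a finite group with identity $\iota$ and let $(C_1,C_2,C_3,C_4)$ be a class vector of $G$. For $k\in\{1,2,3\}$ let $$\mathrm{Fix}_k=\{[\underline{\sigma}]\in\Sigma^i(C_1,C_2,C_3,C_4) \mid [\underline{\sigma}]^{\varphi_{4,k}}=[\underline{\sigma}]\}.$$ Then for every $k\in\{1,2,3\}$, every $\beta\in B_4$ and every $[\underline{\sigma}]\in\Sigma^i(C_1,C_2,C_3,C_4)$ we have $[\underline{\sigma}]\in \mathrm{Fix}_k$ if and only if $[\underline{\sigma}]^{\beta}\in\mathrm{Fix}_k$. In other words, the function $F_{B_4}(F_{4,k},\cdot)$ on $\Sigma^i(C_1,C_2,C_3,C_4)$, equal to $1$ on fixed points of $F_{4,k}=\langle\varphi_{4,k}\rangle$ and $-1$ otherwise, is invariant under the action of $B_4$.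
   Context: A class vector of length $m$ is a tuple $(C_1,\dots,C_m)$ of non-trivial conjugacy classes of $G$. $\Sigma(C_1,\dots,C_m)$ is the set of tuples $(\sigma_1,\dots,\sigma_m)$ with $\sigma_i\in C_i$, $\langle\sigma_1,\dots,\sigma_m\rangle=G$ and $\sigma_1\cdots\sigma_m=\iota$; $G$ acts on it by simultaneous conjugation and $\Sigma^i(C_1,\dots,C_m)$ is the set of orbits, the orbit of $(\sigma_1,\dots,\sigma_m)$ being written $[\sigma_1,\dots,\sigma_m]$. $\Sigma^i(C_1,\dots,C_m)^{sy}$ is the union of $\Sigma^i(C_{\pi(1)},\dots,C_{\pi(m)})$ over $\pi\in S_m$. The Hurwitz braid group $H_4$ is generated by $\beta_2,\beta_3,\beta_4$ with relations $\beta_2\beta_4=\beta_4\beta_2$, $\beta_2\beta_3\beta_2=\beta_3\beta_2\beta_3$, $\beta_3\beta_4\beta_3=\beta_4\beta_3\beta_4$, $\beta_2\beta_3\beta_4^2\beta_3\beta_2=1$; it acts from the right on $\Sigma^i(C_1,\dots,C_4)^{sy}$ by $[\underline{\sigma}]^{\beta_2}=[\sigma_1\sigma_2\sigma_1^{-1},\sigma_1,\sigma_3,\sigma_4]$, $[\underline{\sigma}]^{\beta_3}=[\sigma_1,\sigma_2\sigma_3\sigma_2^{-1},\sigma_2,\sigma_4]$, $[\underline{\sigma}]^{\beta_4}=[\sigma_1,\sigma_2,\sigma_3\sigma_4\sigma_3^{-1},\sigma_3]$. The pure braid group $B_4$ is generated by $\beta_{ij}=\beta_{i+1}^{-1}\cdots\beta_{j-1}^{-1}\beta_j^2\beta_{j-1}\cdots\beta_{i+1}$,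 $1\le i<j\le 4$; it maps $\Sigma^i(C_1,\dots,C_4)$ to itself. Put $\varphi_{4,1}=\beta_2\beta_4^{-1}$, $\varphi_{4,2}=(\beta_2\beta_3\beta_4)^2$, $\varphi_{4,3}=\varphi_{4,1}\varphi_{4,2}$; they act by $[\underline{\sigma}]^{\varphi_{4,1}}=[\sigma_2,\sigma_1,\sigma_1^{-1}\sigma_4\sigma_1,\sigma_1^{-1}\sigma_4^{-1}\sigma_3\sigma_4\sigma_1]$, $[\underline{\sigma}]^{\varphi_{4,2}}=[\sigma_3,\sigma_4,\sigma_1,\sigma_2]$, $[\underline{\sigma}]^{\varphi_{4,3}}=[\sigma_4,\sigma_4^{-1}\sigma_3\sigma_4,\sigma_1\sigma_2\sigma_1^{-1},\sigma_1]$. *)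

theory Defs
  imports "HOL-Algebra.Algebra"
begin

definition conj_class :: "('a, 'b) monoid_scheme \<Rightarrow> 'a \<Rightarrow> 'a set" where
  "conj_class G x = {inv\<^bsub>G\<^esub> g \<otimes>\<^bsub>G\<^esub> x \<otimes>\<^bsub>G\<^esub> g | g. g \<in> carrier G}"

definition class_vector :: "('a, 'b) monoid_scheme \<Rightarrow> nat \<Rightarrow> 'a set list \<Rightarrow> bool" where
  "class_vector G m C \<longleftrightarrow> length C = m \<and>
     (\<forall>i<m. (\<exists>x\<in>carrier G. C ! i = conj_class G x) \<and> C ! i \<noteq> {\<one>\<^bsub>G\<^esub>})"

definition tprod :: "('a, 'b) monoid_scheme \<Rightarrow> 'a list \<Rightarrow> 'a" where
  "tprod G s = foldr (\<lambda>x y. x \<otimes>\<^bsub>G\<^esub> y) s \<one>\<^bsub>G\<^esub>"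

definition Sigma_tuples :: "('a, 'b) monoid_scheme \<Rightarrow> 'a set list \<Rightarrow> 'a list set" where
  "Sigma_tuples G C = {s. length s = length C \<and> (\<forall>i<length C. s ! i \<in> C ! i)
      \<and> generate G (set s) = carrier G \<and> tprod G s = \<one>\<^bsub>G\<^esub>}"

definition tuple_orbit :: "('a, 'b) monoid_scheme \<Rightarrow> 'a list \<Rightarrow> 'a list set" where
  "tuple_orbit G s = {map (\<lambda>x. inv\<^bsub>G\<^esub> g \<otimes>\<^bsub>G\<^esub> x \<otimes>\<^bsub>G\<^esub> g) s | g. g \<in> carrier G}"

definition Sigma_in :: "('a, 'b) monoid_scheme \<Rightarrow> 'a set list \<Rightarrow> 'a list set set" where
  "Sigma_in G C = tuple_orbit G ` Sigma_tuples G C"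

(* Action of the Hurwitz generators beta_k (k = 2,3,4) and their inverses on 4-tuples
   (lists indexed 0..3 for sigma_1..sigma_4). (k, True) = beta_k, (k, False) = beta_k^{-1}. *)
fun hgen_act :: "('a, 'b) monoid_scheme \<Rightarrow> nat \<times> bool \<Rightarrow> 'a list \<Rightarrow> 'a list" where
  "hgen_act G (k, True) s =
     (if 2 \<le> k \<and> k \<le> 4 then
        s[k - 2 := s ! (k - 2) \<otimes>\<^bsub>G\<^esub> s ! (k - 1) \<otimes>\<^bsub>G\<^esub> inv\<^bsub>G\<^esub> (s ! (k - 2)),
          k - 1 := s ! (k - 2)]
      else s)"
| "hgen_act G (k, False) s =
     (if 2 \<le> k \<and> k \<le> 4 then
        s[k - 2 := s ! (k - 1),
          k - 1 := inv\<^bsub>G\<^esub> (s ! (k - 1)) \<otimes>\<^bsub>G\<^esub> s ! (k - 2) \<otimes>\<^bsub>G\<^esub> s ! (k - 1)]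
      else s)"

(* Right action of a word in the generators of H_4: apply letters left to right *)
definition hword_act :: "('a, 'b) monoid_scheme \<Rightarrow> (nat \<times> bool) list \<Rightarrow> 'a list \<Rightarrow> 'a list" where
  "hword_act G w s = foldl (\<lambda>t a. hgen_act G a t) s w"

definition inv_word :: "(nat \<times> bool) list \<Rightarrow> (nat \<times> bool) list" where
  "inv_word w = rev (map (\<lambda>(k, e). (k, \<not> e)) w)"

(* beta_ij = beta_{i+1}^{-1} ... beta_{j-1}^{-1} beta_j^2 beta_{j-1} ... beta_{i+1} *)
definition beta_pure :: "nat \<Rightarrow> nat \<Rightarrow> (nat \<times> bool) list" where
  "beta_pure i j = map (\<lambda>k. (k, False)) [i+1..<j] @ [(j, True), (j, True)]
                   @ map (\<lambda>k. (k, True)) (rev [i+1..<j])"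

(* Words representing elements of the pure braid group B_4: products of the
   generators beta_ij (1 <= i < j <= 4) and their inverses *)
definition pure_braid_words :: "(nat \<times> bool) list set" where
  "pure_braid_words = {concat (map (\<lambda>(i, j, e). if e then beta_pure i j else inv_word (beta_pure i j)) l)
      | l :: (nat \<times> nat \<times> bool) list. \<forall>(i, j, e) \<in> set l. 1 \<le> i \<and> i < j \<and> j \<le> 4}"

(* phi_{4,1} = beta_2 beta_4^{-1}, phi_{4,2} = (beta_2 beta_3 beta_4)^2, phi_{4,3} = phi_{4,1} phi_{4,2} *)
definition phi41 :: "(nat \<times> bool) list" where "phi41 = [(2, True), (4, False)]"
definition phi42 :: "(nat \<times> bool) list" where
  "phi42 = [(2, True), (3, True), (4, True), (2, True), (3, True), (4, True)]"
definition phi43 :: "(nat \<times> bool) list" where "phi43 = phi41 @ phi42"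

definition phi4 :: "nat \<Rightarrow> (nat \<times> bool) list" where
  "phi4 k = (if k = 1 then phi41 else if k = 2 then phi42 else phi43)"

definition Fix4 :: "('a, 'b) monoid_scheme \<Rightarrow> 'a set list \<Rightarrow> nat \<Rightarrow> 'a list set set" where
  "Fix4 G C k = {tuple_orbit G s | s. s \<in> Sigma_tuples G C \<and>
                   tuple_orbit G (hword_act G (phi4 k) s) = tuple_orbit G s}"

end

theory Submission
  imports Defs
begin

(* The Hurwitz action commutes with simultaneous conjugation and is invertible, so it acts on
   conjugation orbits.  The key fact is that phi_{4,1} and phi_{4,2}, hence phi_{4,3}, commute
   with every pure braid up to simultaneous conjugation: for each generator beta_ij and each
   tuple with product one, the two composites differ by an explicit inner automorphism.
   Consequently [sigma]^phi = [sigma] iff [sigma^beta]^phi = [sigma^beta].  Finally a pure braid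
   induces the trivial permutation of the four strands, so it keeps every entry in its
   conjugacy class and maps Sigma(C_1,...,C_4) to itself. *)

definition conj_tuple :: "('a, 'b) monoid_scheme \<Rightarrow> 'a \<Rightarrow> 'a list \<Rightarrow> 'a list" where
  "conj_tuple G g s = map (\<lambda>x. inv\<^bsub>G\<^esub> g \<otimes>\<^bsub>G\<^esub> x \<otimes>\<^bsub>G\<^esub> g) s"

definition prod_one_tuple :: "('a, 'b) monoid_scheme \<Rightarrow> 'a list \<Rightarrow> bool" where
  "prod_one_tuple G s \<longleftrightarrow> length s = 4 \<and> set s \<subseteq> carrier G \<and> tprod G s = \<one>\<^bsub>G\<^esub>"

lemma length_4_conv: "length s = 4 \<longleftrightarrow> (\<exists>a b c d. s = [a, b, c, d])"
  by (auto simp: length_Suc_conv numeral_eq_Suc)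

lemma hword_act_Nil [simp]: "hword_act G [] s = s"
  by (simp add: hword_act_def)

lemma hword_act_Cons [simp]: "hword_act G (x # w) s = hword_act G w (hgen_act G x s)"
  by (simp add: hword_act_def)

lemma hword_act_append: "hword_act G (u @ v) s = hword_act G v (hword_act G u s)"
  by (simp add: hword_act_def)

lemma hgen_act_4: "hgen_act G (k, e) [a, b, c, d] =
  (if k = 2 then (if e then [a \<otimes>\<^bsub>G\<^esub> b \<otimes>\<^bsub>G\<^esub> inv\<^bsub>G\<^esub> a, a, c, d]
                 else [b, inv\<^bsub>G\<^esub> b \<otimes>\<^bsub>G\<^esub> a \<otimes>\<^bsub>G\<^esub> b, c, d])
   else if k = 3 then (if e then [a, b \<otimes>\<^bsub>G\<^esub> c \<otimes>\<^bsub>G\<^esub> inv\<^bsub>G\<^esub> b, b, d]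
                      else [a, c, inv\<^bsub>G\<^esub> c \<otimes>\<^bsub>G\<^esub> b \<otimes>\<^bsub>G\<^esub> c, d])
   else if k = 4 then (if e then [a, b, c \<otimes>\<^bsub>G\<^esub> d \<otimes>\<^bsub>G\<^esub> inv\<^bsub>G\<^esub> c, c]
                      else [a, b, d, inv\<^bsub>G\<^esub> d \<otimes>\<^bsub>G\<^esub> c \<otimes>\<^bsub>G\<^esub> d])
   else [a, b, c, d])"
  by (cases e) (auto simp: numeral_eq_Suc)

lemma length_hgen_act [simp]: "length (hgen_act G x s) = length s"
  by (cases x; cases "snd x") auto

declare hgen_act.simps [simp del] hgen_act_4 [simp]

lemma length_hword_act [simp]: "length (hword_act G w s) = length s"
  by (induction w arbitrary: s) auto

lemma inv_word_Cons: "inv_word ((k, e) # w) = inv_word w @ [(k, \<not> e)]"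
  by (simp add: inv_word_def)

lemma inv_word_inv_word [simp]: "inv_word (inv_word w) = w"
  by (simp add: inv_word_def rev_map comp_def case_prod_beta)

(* The transposition of positions k - 1 and k (counted from 1) that beta_k and its inverse both
   induce, i.e. the image of the braid in S_4. *)
definition swap_strands :: "nat \<Rightarrow> 'x list \<Rightarrow> 'x list" where
  "swap_strands k D = (if 2 \<le> k \<and> k \<le> 4 then D[k - 2 := D ! (k - 1), k - 1 := D ! (k - 2)] else D)"

definition permute_strands :: "nat list \<Rightarrow> 'x list \<Rightarrow> 'x list" where
  "permute_strands ks D = foldl (\<lambda>D k. swap_strands k D) D ks"

lemma swap_strands_4: "swap_strands k [A, B, C, D] =
  (if k = 2 then [B, A, C, D] else if k = 3 then [A, C, B, D] else if k = 4 then [A, B, D, C]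
   else [A, B, C, D])"
  by (auto simp: swap_strands_def numeral_eq_Suc)

lemma length_swap_strands [simp]: "length (swap_strands k D) = length D"
  by (simp add: swap_strands_def)

lemma swap_strands_swap_strands:
  "length D = 4 \<Longrightarrow> swap_strands k (swap_strands k D) = D"
  by (auto simp: length_4_conv swap_strands_4)

lemma permute_strands_Nil [simp]: "permute_strands [] D = D"
  by (simp add: permute_strands_def)

lemma permute_strands_Cons [simp]: "permute_strands (k # ks) D = permute_strands ks (swap_strands k D)"
  by (simp add: permute_strands_def)

lemma permute_strands_append:
  "permute_strands (ks @ ls) D = permute_strands ls (permute_strands ks D)"
  by (simp add: permute_strands_def)

lemma permute_strands_rev:
  "length D = 4 \<Longrightarrow> permute_strands (rev ks) (permute_strands ks D) = D"
  by (induction ks arbitrary: D) (auto simp: permute_strands_append swap_strands_swap_strands)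

lemma permute_strands_beta_pure:
  assumes "length D = 4"
  shows "permute_strands (map fst (beta_pure i j)) D = D"
    and "permute_strands (map fst (inv_word (beta_pure i j))) D = D"
proof -
  define ks where "ks = [i + 1..<j] @ [j]"
  have "map fst (beta_pure i j) = ks @ rev ks"
    by (simp add: ks_def beta_pure_def comp_def)
  moreover have "map fst (inv_word u) = rev (map fst u)" for u
    by (simp add: inv_word_def rev_map comp_def case_prod_beta)
  ultimately show "permute_strands (map fst (beta_pure i j)) D = D"
    and "permute_strands (map fst (inv_word (beta_pure i j))) D = D"
    using permute_strands_rev[OF assms] by (simp_all add: permute_strands_append)
qed

definition pure_braid_generator :: "(nat \<times> bool) list \<Rightarrow> bool" where
  "pure_braid_generator u \<longleftrightarrow>
     (\<exists>i j. 1 \<le> i \<and> i < j \<and> j \<le> 4 \<and> (u = beta_pure i j \<or> u = inv_word (beta_pure i j)))"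

lemma pure_braid_wordsE:
  assumes "w \<in> pure_braid_words"
  obtains us where "w = concat us" "\<forall>u \<in> set us. pure_braid_generator u"
  using assms unfolding pure_braid_words_def pure_braid_generator_def by fastforce

lemma permute_strands_pure_braid:
  assumes "w \<in> pure_braid_words" "length D = 4"
  shows "permute_strands (map fst w) D = D"
proof -
  obtain us where w: "w = concat us"
    and gens: "\<forall>u \<in> set us. pure_braid_generator u"
    using assms(1) by (rule pure_braid_wordsE)
  show ?thesis
    unfolding w using gens
    by (induction us)
      (auto simp: pure_braid_generator_def permute_strands_append permute_strands_beta_pure assms(2))
qed

context group
begin

lemma inv_mult_cancel: "x \<in> carrier G \<Longrightarrow> y \<in> carrier G \<Longrightarrow> inv x \<otimes> (x \<otimes> y) = y"
  by (simp flip: m_assoc)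

lemma mult_inv_cancel: "x \<in> carrier G \<Longrightarrow> y \<in> carrier G \<Longrightarrow> x \<otimes> (inv x \<otimes> y) = y"
  by (simp flip: m_assoc)

lemmas group_normalize = m_assoc inv_mult_group inv_mult_cancel mult_inv_cancel

lemma hgen_act_carrier:
  assumes "length s = 4" "set s \<subseteq> carrier G"
  shows "set (hgen_act G x s) \<subseteq> carrier G"
  using assms by (cases x) (auto simp: length_4_conv split: if_splits)

lemma hgen_act_tprod:
  assumes "length s = 4" "set s \<subseteq> carrier G"
  shows "tprod G (hgen_act G x s) = tprod G s"
  using assms by (cases x) (auto simp: length_4_conv tprod_def group_normalize)

lemma hgen_act_conj_tuple:
  assumes "length s = 4" "set s \<subseteq> carrier G" "g \<in> carrier G"
  shows "hgen_act G x (conj_tuple G g s) = conj_tuple G g (hgen_act G x s)"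
  using assms by (cases x) (auto simp: length_4_conv conj_tuple_def group_normalize)

lemma hgen_act_inverse:
  assumes "length s = 4" "set s \<subseteq> carrier G"
  shows "hgen_act G (k, \<not> e) (hgen_act G (k, e) s) = s"
  using assms by (cases e) (auto simp: length_4_conv group_normalize)

lemma hgen_act_subset_generate:
  assumes "length s = 4" "set s \<subseteq> carrier G"
  shows "set (hgen_act G (k, e) s) \<subseteq> generate G (set s)"
proof -
  obtain a b c d where s: "s = [a, b, c, d]"
    using assms(1) by (auto simp: length_4_conv)
  interpret H: subgroup "generate G {a, b, c, d}" G
    using assms(2) s by (intro generate_is_subgroup) auto
  have "a \<in> generate G {a, b, c, d}" "b \<in> generate G {a, b, c, d}"
    "c \<in> generate G {a, b, c, d}" "d \<in> generate G {a, b, c, d}"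
    by (auto intro: generate.incl)
  then show ?thesis
    unfolding s by auto
qed

lemma generate_eqI:
  assumes "A \<subseteq> carrier G" "B \<subseteq> carrier G" "A \<subseteq> generate G B" "B \<subseteq> generate G A"
  shows "generate G A = generate G B"
  using generate_subgroup_incl[OF assms(3) generate_is_subgroup[OF assms(2)]]
    generate_subgroup_incl[OF assms(4) generate_is_subgroup[OF assms(1)]] by blast

lemma hgen_act_generate:
  assumes "length s = 4" "set s \<subseteq> carrier G"
  shows "generate G (set (hgen_act G x s)) = generate G (set s)"
proof -
  obtain k e where x: "x = (k, e)"
    by (cases x)
  have t: "length (hgen_act G x s) = 4" "set (hgen_act G x s) \<subseteq> carrier G"
    using assms hgen_act_carrier by auto
  have "set s \<subseteq> generate G (set (hgen_act G x s))"
    using hgen_act_subset_generate[OF t, of k "\<not> e"] hgen_act_inverse[OF assms] x by simp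
  then show ?thesis
    using assms t hgen_act_subset_generate x by (intro generate_eqI) auto
qed

lemma hword_act_carrier:
  "length s = 4 \<Longrightarrow> set s \<subseteq> carrier G \<Longrightarrow> set (hword_act G w s) \<subseteq> carrier G"
  by (induction w arbitrary: s) (auto simp: hgen_act_carrier)

lemma hword_act_tprod:
  "length s = 4 \<Longrightarrow> set s \<subseteq> carrier G \<Longrightarrow> tprod G (hword_act G w s) = tprod G s"
  by (induction w arbitrary: s) (auto simp: hgen_act_carrier hgen_act_tprod)

lemma hword_act_generate:
  "length s = 4 \<Longrightarrow> set s \<subseteq> carrier G \<Longrightarrow> generate G (set (hword_act G w s)) = generate G (set s)"
  by (induction w arbitrary: s) (auto simp: hgen_act_carrier hgen_act_generate)

lemma hword_act_conj_tuple:
  "length s = 4 \<Longrightarrow> set s \<subseteq> carrier G \<Longrightarrow> g \<in> carrier G \<Longrightarrow>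
   hword_act G w (conj_tuple G g s) = conj_tuple G g (hword_act G w s)"
  by (induction w arbitrary: s) (auto simp: hgen_act_carrier hgen_act_conj_tuple)

lemma hword_act_inv_word:
  "length s = 4 \<Longrightarrow> set s \<subseteq> carrier G \<Longrightarrow> hword_act G (inv_word w) (hword_act G w s) = s"
proof (induction w arbitrary: s)
  case (Cons x w)
  obtain k e where "x = (k, e)" by (cases x)
  with Cons show ?case
    by (simp add: inv_word_Cons hword_act_append hgen_act_carrier hgen_act_inverse)
qed (simp add: inv_word_def)

lemma hword_act_inv_word':
  "length s = 4 \<Longrightarrow> set s \<subseteq> carrier G \<Longrightarrow> hword_act G w (hword_act G (inv_word w) s) = s"
  using hword_act_inv_word[of s "inv_word w"] by simp

lemma prod_one_tuple_hword_act: "prod_one_tuple G s \<Longrightarrow> prod_one_tuple G (hword_act G w s)"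
  by (simp add: prod_one_tuple_def hword_act_carrier hword_act_tprod)

lemma conj_class_self: "x \<in> carrier G \<Longrightarrow> x \<in> conj_class G x"
  unfolding conj_class_def by force

lemma conj_class_trans:
  assumes "x \<in> carrier G" "y \<in> conj_class G x" "z \<in> conj_class G y"
  shows "z \<in> conj_class G x"
proof -
  obtain g h where "g \<in> carrier G" "h \<in> carrier G" "y = inv g \<otimes> x \<otimes> g" "z = inv h \<otimes> y \<otimes> h"
    using assms(2,3) unfolding conj_class_def by blast
  then have "g \<otimes> h \<in> carrier G" "z = inv (g \<otimes> h) \<otimes> x \<otimes> (g \<otimes> h)"
    using assms(1) by (simp_all add: group_normalize)
  then show ?thesis
    unfolding conj_class_def by blast
qed

lemma conj_class_sym:
  assumes "x \<in> carrier G" "y \<in> conj_class G x"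
  shows "x \<in> conj_class G y"
proof -
  obtain g where "g \<in> carrier G" "y = inv g \<otimes> x \<otimes> g"
    using assms(2) unfolding conj_class_def by blast
  then have "inv g \<in> carrier G" "x = inv (inv g) \<otimes> y \<otimes> inv g"
    using assms(1) by (simp_all add: group_normalize)
  then show ?thesis
    unfolding conj_class_def by blast
qed

lemma conj_class_eq:
  assumes "x \<in> carrier G" "y \<in> conj_class G x"
  shows "conj_class G y = conj_class G x"
proof -
  have "y \<in> carrier G"
    using assms unfolding conj_class_def by auto
  then show ?thesis
    using assms conj_class_trans conj_class_sym by blast
qed

lemma conj_class_conj:
  assumes "x \<in> carrier G" "g \<in> carrier G"
  shows "conj_class G (inv g \<otimes> x \<otimes> g) = conj_class G x"
  using assms by (intro conj_class_eq) (auto simp: conj_class_def)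

lemma conj_class_conj':
  assumes "x \<in> carrier G" "g \<in> carrier G"
  shows "conj_class G (g \<otimes> x \<otimes> inv g) = conj_class G x"
  using conj_class_conj[of x "inv g"] assms by simp

lemma hgen_act_conj_class:
  assumes "length s = 4" "set s \<subseteq> carrier G"
  shows "map (conj_class G) (hgen_act G x s) = swap_strands (fst x) (map (conj_class G) s)"
proof -
  obtain a b c d where s: "s = [a, b, c, d]"
    using assms(1) by (auto simp: length_4_conv)
  obtain k e where x: "x = (k, e)"
    by (cases x)
  show ?thesis
    using assms(2) unfolding s x
    by (cases e) (simp_all add: swap_strands_4 conj_class_conj conj_class_conj')
qed

lemma hword_act_conj_class:
  "length s = 4 \<Longrightarrow> set s \<subseteq> carrier G \<Longrightarrow>
   map (conj_class G) (hword_act G w s) = permute_strands (map fst w) (map (conj_class G) s)"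
  by (induction w arbitrary: s) (auto simp: hgen_act_carrier hgen_act_conj_class)

lemma tuple_orbit_conv: "tuple_orbit G s = {conj_tuple G g s | g. g \<in> carrier G}"
  by (simp add: tuple_orbit_def conj_tuple_def)

lemma conj_tuple_one: "set s \<subseteq> carrier G \<Longrightarrow> conj_tuple G \<one> s = s"
  by (auto simp: conj_tuple_def intro!: map_idI)

lemma conj_tuple_conj_tuple:
  "set s \<subseteq> carrier G \<Longrightarrow> g \<in> carrier G \<Longrightarrow> h \<in> carrier G \<Longrightarrow>
   conj_tuple G g (conj_tuple G h s) = conj_tuple G (h \<otimes> g) s"
  by (auto simp: conj_tuple_def group_normalize subset_iff)

lemma tuple_orbit_self: "set s \<subseteq> carrier G \<Longrightarrow> s \<in> tuple_orbit G s"
  unfolding tuple_orbit_conv using conj_tuple_one[symmetric] one_closed by blast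

lemma tuple_orbit_conj_tuple:
  assumes "set s \<subseteq> carrier G" "g \<in> carrier G"
  shows "tuple_orbit G (conj_tuple G g s) = tuple_orbit G s"
proof (intro equalityI subsetI)
  fix u assume "u \<in> tuple_orbit G (conj_tuple G g s)"
  then obtain h where h: "h \<in> carrier G" "u = conj_tuple G h (conj_tuple G g s)"
    unfolding tuple_orbit_conv by blast
  then have "u = conj_tuple G (g \<otimes> h) s" "g \<otimes> h \<in> carrier G"
    using assms by (simp_all add: conj_tuple_conj_tuple)
  then show "u \<in> tuple_orbit G s"
    unfolding tuple_orbit_conv by blast
next
  fix u assume "u \<in> tuple_orbit G s"
  then obtain h where h: "h \<in> carrier G" "u = conj_tuple G h s"
    unfolding tuple_orbit_conv by blast
  then have "u = conj_tuple G (inv g \<otimes> h) (conj_tuple G g s)" "inv g \<otimes> h \<in> carrier G"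
    using assms by (simp_all add: conj_tuple_conj_tuple flip: m_assoc)
  then show "u \<in> tuple_orbit G (conj_tuple G g s)"
    unfolding tuple_orbit_conv by blast
qed

lemma tuple_orbit_eq_iff:
  assumes "set s \<subseteq> carrier G" "set t \<subseteq> carrier G"
  shows "tuple_orbit G s = tuple_orbit G t \<longleftrightarrow> (\<exists>g \<in> carrier G. s = conj_tuple G g t)"
proof
  assume "tuple_orbit G s = tuple_orbit G t"
  then have "s \<in> tuple_orbit G t"
    using tuple_orbit_self[OF assms(1)] by simp
  then show "\<exists>g \<in> carrier G. s = conj_tuple G g t"
    unfolding tuple_orbit_conv by blast
qed (use assms(2) tuple_orbit_conj_tuple in blast)

lemma tuple_orbit_hword_act:
  assumes "length s = 4" "set s \<subseteq> carrier G" "length t = 4" "set t \<subseteq> carrier G"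
    and "tuple_orbit G s = tuple_orbit G t"
  shows "tuple_orbit G (hword_act G w s) = tuple_orbit G (hword_act G w t)"
proof -
  obtain g where "g \<in> carrier G" "s = conj_tuple G g t"
    using assms(5) tuple_orbit_eq_iff[OF assms(2,4)] by blast
  then show ?thesis
    using assms(3,4) by (simp add: hword_act_conj_tuple tuple_orbit_conj_tuple hword_act_carrier)
qed

lemma tuple_orbit_hword_act_iff:
  assumes "length s = 4" "set s \<subseteq> carrier G" "length t = 4" "set t \<subseteq> carrier G"
  shows "tuple_orbit G (hword_act G w s) = tuple_orbit G (hword_act G w t) \<longleftrightarrow>
    tuple_orbit G s = tuple_orbit G t"
proof
  assume "tuple_orbit G (hword_act G w s) = tuple_orbit G (hword_act G w t)"
  then show "tuple_orbit G s = tuple_orbit G t"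
    using tuple_orbit_hword_act[of "hword_act G w s" "hword_act G w t" "inv_word w"] assms
    by (simp add: hword_act_carrier hword_act_inv_word)
qed (use assms tuple_orbit_hword_act in blast)

lemma prod_one_tupleE:
  assumes "prod_one_tuple G s"
  obtains a b c where "a \<in> carrier G" "b \<in> carrier G" "c \<in> carrier G"
    and "s = [a, b, c, inv (a \<otimes> b \<otimes> c)]"
proof -
  obtain a b c d where s: "s = [a, b, c, d]"
    using assms by (auto simp: prod_one_tuple_def length_4_conv)
  have abcd: "a \<in> carrier G" "b \<in> carrier G" "c \<in> carrier G" "d \<in> carrier G"
    using assms s by (auto simp: prod_one_tuple_def)
  then have "(a \<otimes> b \<otimes> c) \<otimes> d = \<one>"
    using assms s by (simp add: prod_one_tuple_def tprod_def m_assoc)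
  then have "d \<otimes> (a \<otimes> b \<otimes> c) = \<one>"
    by (rule inv_comm) (simp_all add: abcd)
  then have "inv (a \<otimes> b \<otimes> c) = d"
    by (rule inv_equality) (simp_all add: abcd)
  with abcd s that show ?thesis
    by blast
qed

end

definition commute_mod_conj ::
    "('a, 'b) monoid_scheme \<Rightarrow> (nat \<times> bool) list \<Rightarrow> (nat \<times> bool) list \<Rightarrow> bool" where
  "commute_mod_conj G u v \<longleftrightarrow> (\<forall>s. prod_one_tuple G s \<longrightarrow>
     tuple_orbit G (hword_act G v (hword_act G u s)) = tuple_orbit G (hword_act G u (hword_act G v s)))"

context group
begin

lemma commute_mod_conjI:
  assumes "\<And>a b c. a \<in> carrier G \<Longrightarrow> b \<in> carrier G \<Longrightarrow> c \<in> carrier G \<Longrightarrow>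
      f a b c \<in> carrier G"
    and "\<And>a b c. a \<in> carrier G \<Longrightarrow> b \<in> carrier G \<Longrightarrow> c \<in> carrier G \<Longrightarrow>
      hword_act G v (hword_act G u [a, b, c, inv (a \<otimes> b \<otimes> c)]) =
      conj_tuple G (f a b c) (hword_act G u (hword_act G v [a, b, c, inv (a \<otimes> b \<otimes> c)]))"
  shows "commute_mod_conj G u v"
  unfolding commute_mod_conj_def
proof (intro allI impI)
  fix s assume "prod_one_tuple G s"
  then obtain a b c where abc: "a \<in> carrier G" "b \<in> carrier G" "c \<in> carrier G"
    and s: "s = [a, b, c, inv (a \<otimes> b \<otimes> c)]"
    by (rule prod_one_tupleE)
  then have "set (hword_act G u (hword_act G v s)) \<subseteq> carrier G"
    by (simp add: hword_act_carrier)
  then show "tuple_orbit G (hword_act G v (hword_act G u s)) = tuple_orbit G (hword_act G u (hword_act G v s))"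
    using assms abc unfolding s by (simp add: tuple_orbit_conj_tuple)
qed

lemma commute_mod_conjD:
  "commute_mod_conj G u v \<Longrightarrow> prod_one_tuple G s \<Longrightarrow>
   tuple_orbit G (hword_act G v (hword_act G u s)) = tuple_orbit G (hword_act G u (hword_act G v s))"
  by (simp add: commute_mod_conj_def)

lemma commute_mod_conj_append_left:
  assumes "commute_mod_conj G u1 v" "commute_mod_conj G u2 v"
  shows "commute_mod_conj G (u1 @ u2) v"
  unfolding commute_mod_conj_def
proof (intro allI impI)
  fix s assume s: "prod_one_tuple G s"
  then have "tuple_orbit G (hword_act G v (hword_act G u2 (hword_act G u1 s)))
      = tuple_orbit G (hword_act G u2 (hword_act G v (hword_act G u1 s)))"
    by (intro commute_mod_conjD[OF assms(2)] prod_one_tuple_hword_act)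
  also have "\<dots> = tuple_orbit G (hword_act G u2 (hword_act G u1 (hword_act G v s)))"
    using s commute_mod_conjD[OF assms(1) s]
    by (intro tuple_orbit_hword_act) (auto simp: prod_one_tuple_def hword_act_carrier)
  finally show "tuple_orbit G (hword_act G v (hword_act G (u1 @ u2) s))
      = tuple_orbit G (hword_act G (u1 @ u2) (hword_act G v s))"
    by (simp add: hword_act_append)
qed

lemma commute_mod_conj_append_right:
  assumes "commute_mod_conj G u v1" "commute_mod_conj G u v2"
  shows "commute_mod_conj G u (v1 @ v2)"
  unfolding commute_mod_conj_def
proof (intro allI impI)
  fix s assume s: "prod_one_tuple G s"
  then have "tuple_orbit G (hword_act G v2 (hword_act G v1 (hword_act G u s)))
      = tuple_orbit G (hword_act G v2 (hword_act G u (hword_act G v1 s)))"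
    using commute_mod_conjD[OF assms(1) s]
    by (intro tuple_orbit_hword_act) (auto simp: prod_one_tuple_def hword_act_carrier)
  also have "\<dots> = tuple_orbit G (hword_act G u (hword_act G v2 (hword_act G v1 s)))"
    using s by (intro commute_mod_conjD[OF assms(2)] prod_one_tuple_hword_act)
  finally show "tuple_orbit G (hword_act G (v1 @ v2) (hword_act G u s))
      = tuple_orbit G (hword_act G u (hword_act G (v1 @ v2) s))"
    by (simp add: hword_act_append)
qed

lemma commute_mod_conj_inv_word:
  assumes "commute_mod_conj G u v"
  shows "commute_mod_conj G (inv_word u) v"
  unfolding commute_mod_conj_def
proof (intro allI impI)
  fix s assume s: "prod_one_tuple G s"
  define t where "t = hword_act G (inv_word u) s"
  have t: "prod_one_tuple G t" "hword_act G u t = s"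
    using s by (simp_all add: t_def prod_one_tuple_hword_act)
      (simp add: prod_one_tuple_def hword_act_inv_word')
  have "tuple_orbit G (hword_act G v s) = tuple_orbit G (hword_act G u (hword_act G v t))"
    using commute_mod_conjD[OF assms t(1)] t(2) by simp
  then have "tuple_orbit G (hword_act G (inv_word u) (hword_act G v s))
      = tuple_orbit G (hword_act G (inv_word u) (hword_act G u (hword_act G v t)))"
    using s t(1) by (intro tuple_orbit_hword_act) (auto simp: prod_one_tuple_def hword_act_carrier)
  also have "\<dots> = tuple_orbit G (hword_act G v t)"
    using t(1) by (simp add: prod_one_tuple_def hword_act_carrier hword_act_inv_word)
  finally show "tuple_orbit G (hword_act G v (hword_act G (inv_word u) s))
      = tuple_orbit G (hword_act G (inv_word u) (hword_act G v s))"
    by (simp add: t_def)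
qed

lemma commute_mod_conj_Nil: "commute_mod_conj G [] v"
  by (simp add: commute_mod_conj_def)

lemma commute_mod_conj_concat:
  "\<forall>u \<in> set us. commute_mod_conj G u v \<Longrightarrow> commute_mod_conj G (concat us) v"
  by (induction us) (simp_all add: commute_mod_conj_Nil commute_mod_conj_append_left)

lemma beta_pure_commute_phi41:
  assumes "1 \<le> i" "i < j" "j \<le> 4"
  shows "commute_mod_conj G (beta_pure i j) phi41"
proof -
  consider "i = 1" "j = 2" | "i = 1" "j = 3" | "i = 1" "j = 4" | "i = 2" "j = 3" | "i = 2" "j = 4"
    | "i = 3" "j = 4"
    using assms by linarith
  then show ?thesis
  proof cases
    case 1
    show ?thesis
      unfolding \<open>i = 1\<close> \<open>j = 2\<close>
      by (rule commute_mod_conjI[where f = "\<lambda>a b c. \<one>"])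
        (simp_all add: beta_pure_def upt_rec phi41_def conj_tuple_def group_normalize)
  next
    case 2
    show ?thesis
      unfolding \<open>i = 1\<close> \<open>j = 3\<close>
      by (rule commute_mod_conjI[where f = "\<lambda>a b c. b \<otimes> inv (a \<otimes> b \<otimes> c)"])
        (simp_all add: beta_pure_def upt_rec phi41_def conj_tuple_def group_normalize)
  next
    case 3
    show ?thesis
      unfolding \<open>i = 1\<close> \<open>j = 4\<close>
      by (rule commute_mod_conjI[where f = "\<lambda>a b c. b \<otimes> c"])
        (simp_all add: beta_pure_def upt_rec phi41_def conj_tuple_def group_normalize)
  next
    case 4
    show ?thesis
      unfolding \<open>i = 2\<close> \<open>j = 3\<close>
      by (rule commute_mod_conjI[where f = "\<lambda>a b c. a \<otimes> inv (a \<otimes> b \<otimes> c)"])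
        (simp_all add: beta_pure_def upt_rec phi41_def conj_tuple_def group_normalize)
  next
    case 5
    show ?thesis
      unfolding \<open>i = 2\<close> \<open>j = 4\<close>
      by (rule commute_mod_conjI[where f = "\<lambda>a b c. a \<otimes> c"])
        (simp_all add: beta_pure_def upt_rec phi41_def conj_tuple_def group_normalize)
  next
    case 6
    show ?thesis
      unfolding \<open>i = 3\<close> \<open>j = 4\<close>
      by (rule commute_mod_conjI[where f = "\<lambda>a b c. \<one>"])
        (simp_all add: beta_pure_def upt_rec phi41_def conj_tuple_def group_normalize)
  qed
qed

lemma beta_pure_commute_phi42:
  assumes "1 \<le> i" "i < j" "j \<le> 4"
  shows "commute_mod_conj G (beta_pure i j) phi42"
proof -
  consider "i = 1" "j = 2" | "i = 1" "j = 3" | "i = 1" "j = 4" | "i = 2" "j = 3" | "i = 2" "j = 4"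
    | "i = 3" "j = 4"
    using assms by linarith
  then show ?thesis
  proof cases
    case 1
    show ?thesis
      unfolding \<open>i = 1\<close> \<open>j = 2\<close>
      by (rule commute_mod_conjI[where f = "\<lambda>a b c. inv (a \<otimes> b)"])
        (simp_all add: beta_pure_def upt_rec phi42_def conj_tuple_def group_normalize)
  next
    case 2
    show ?thesis
      unfolding \<open>i = 1\<close> \<open>j = 3\<close>
      by (rule commute_mod_conjI[where f = "\<lambda>a b c.
          a \<otimes> a \<otimes> b \<otimes> c \<otimes> inv b \<otimes> inv a \<otimes> b \<otimes> inv c \<otimes> inv b \<otimes> inv a"])
        (simp_all add: beta_pure_def upt_rec phi42_def conj_tuple_def group_normalize)
  next
    case 3
    show ?thesis
      unfolding \<open>i = 1\<close> \<open>j = 4\<close>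
      by (rule commute_mod_conjI[where f = "\<lambda>a b c.
          a \<otimes> b \<otimes> b \<otimes> c \<otimes> inv b \<otimes> inv c \<otimes> inv b \<otimes> inv a \<otimes> b \<otimes> c"])
        (simp_all add: beta_pure_def upt_rec phi42_def conj_tuple_def group_normalize)
  next
    case 4
    show ?thesis
      unfolding \<open>i = 2\<close> \<open>j = 3\<close>
      by (rule commute_mod_conjI[where f = "\<lambda>a b c. a \<otimes> inv (a \<otimes> b \<otimes> c)"])
        (simp_all add: beta_pure_def upt_rec phi42_def conj_tuple_def group_normalize)
  next
    case 5
    show ?thesis
      unfolding \<open>i = 2\<close> \<open>j = 4\<close>
      by (rule commute_mod_conjI[where f = "\<lambda>a b c. a \<otimes> b \<otimes> inv a \<otimes> inv c \<otimes> inv b \<otimes> c"])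
        (simp_all add: beta_pure_def upt_rec phi42_def conj_tuple_def group_normalize)
  next
    case 6
    show ?thesis
      unfolding \<open>i = 3\<close> \<open>j = 4\<close>
      by (rule commute_mod_conjI[where f = "\<lambda>a b c. a \<otimes> b"])
        (simp_all add: beta_pure_def upt_rec phi42_def conj_tuple_def group_normalize)
  qed
qed

lemma pure_braid_commute_phi4:
  assumes "w \<in> pure_braid_words" "k \<in> {1, 2, 3}"
  shows "commute_mod_conj G w (phi4 k)"
proof -
  obtain us where w: "w = concat us"
    and gens: "\<forall>u \<in> set us. pure_braid_generator u"
    using assms(1) by (rule pure_braid_wordsE)
  have "commute_mod_conj G w phi41" "commute_mod_conj G w phi42"
    unfolding w using gens
    by (auto simp: pure_braid_generator_def intro!: commute_mod_conj_concat commute_mod_conj_inv_word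
        beta_pure_commute_phi41 beta_pure_commute_phi42)
  then show ?thesis
    using assms(2) by (auto simp: phi4_def phi43_def intro: commute_mod_conj_append_right)
qed

lemma Sigma_tuples_prod_one_tuple:
  "s \<in> Sigma_tuples G C \<Longrightarrow> length C = 4 \<Longrightarrow> prod_one_tuple G s"
  using generate.incl[of _ "set s" G] by (auto simp: Sigma_tuples_def prod_one_tuple_def)

lemma Sigma_tuples_conj_class:
  assumes "class_vector G 4 C" "s \<in> Sigma_tuples G C"
  shows "map (conj_class G) s = C"
proof (rule nth_equalityI)
  have C: "length C = 4" "\<forall>i<4. \<exists>x\<in>carrier G. C ! i = conj_class G x"
    using assms(1) by (auto simp: class_vector_def)
  then show "length (map (conj_class G) s) = length C"
    using assms(2) by (simp add: Sigma_tuples_def)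
  fix i assume i: "i < length (map (conj_class G) s)"
  then have "i < 4" "s ! i \<in> C ! i"
    using assms(2) C(1) by (auto simp: Sigma_tuples_def)
  moreover obtain x where "x \<in> carrier G" "C ! i = conj_class G x"
    using C(2) \<open>i < 4\<close> by blast
  ultimately show "map (conj_class G) s ! i = C ! i"
    using i by (simp add: conj_class_eq)
qed

lemma Sigma_tuples_pure_braid:
  assumes "class_vector G 4 C" "s \<in> Sigma_tuples G C" "w \<in> pure_braid_words"
  shows "hword_act G w s \<in> Sigma_tuples G C"
proof -
  have C: "length C = 4"
    using assms(1) by (simp add: class_vector_def)
  then have s: "length s = 4" "set s \<subseteq> carrier G" "generate G (set s) = carrier G"
    "tprod G s = \<one>"
    using assms(2) Sigma_tuples_prod_one_tuple by (auto simp: Sigma_tuples_def prod_one_tuple_def)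
  have "map (conj_class G) (hword_act G w s) = C"
    using s assms C by (simp add: hword_act_conj_class permute_strands_pure_braid Sigma_tuples_conj_class)
  moreover have "x \<in> conj_class G x" if "x \<in> set (hword_act G w s)" for x
    using that s hword_act_carrier conj_class_self by blast
  ultimately have "\<forall>i<4. hword_act G w s ! i \<in> C ! i"
    using s by (metis length_hword_act nth_map nth_mem)
  then show ?thesis
    using s C by (simp add: Sigma_tuples_def hword_act_generate hword_act_tprod)
qed

lemma Fix4_iff:
  assumes "length C = 4" "s \<in> Sigma_tuples G C"
  shows "tuple_orbit G s \<in> Fix4 G C k \<longleftrightarrow> tuple_orbit G (hword_act G (phi4 k) s) = tuple_orbit G s"
proof
  assume "tuple_orbit G s \<in> Fix4 G C k"
  then obtain s' where s': "s' \<in> Sigma_tuples G C" "tuple_orbit G s = tuple_orbit G s'"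
    "tuple_orbit G (hword_act G (phi4 k) s') = tuple_orbit G s'"
    unfolding Fix4_def by auto
  have "prod_one_tuple G s" "prod_one_tuple G s'"
    using assms s'(1) Sigma_tuples_prod_one_tuple by auto
  then show "tuple_orbit G (hword_act G (phi4 k) s) = tuple_orbit G s"
    using s' tuple_orbit_hword_act[of s s'] by (simp add: prod_one_tuple_def)
qed (use assms(2) in \<open>auto simp: Fix4_def\<close>)

end

theorem theorem1:
  fixes G :: "('a, 'b) monoid_scheme" and C :: "'a set list"
  assumes "group G" and "finite (carrier G)" and "class_vector G 4 C"
    and "k \<in> {1, 2, 3 :: nat}" and "w \<in> pure_braid_words" and "s \<in> Sigma_tuples G C"
  shows "tuple_orbit G s \<in> Fix4 G C k \<longleftrightarrow> tuple_orbit G (hword_act G w s) \<in> Fix4 G C k"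
proof -
  interpret group G by (rule assms(1))
  let ?p = "phi4 k"
  have C: "length C = 4"
    using assms(3) by (simp add: class_vector_def)
  have s: "prod_one_tuple G s"
    using assms(6) C by (rule Sigma_tuples_prod_one_tuple)
  have "tuple_orbit G (hword_act G ?p (hword_act G w s)) = tuple_orbit G (hword_act G w (hword_act G ?p s))"
    using pure_braid_commute_phi4[OF assms(5,4)] s by (rule commute_mod_conjD)
  moreover have "tuple_orbit G (hword_act G w (hword_act G ?p s)) = tuple_orbit G (hword_act G w s)
      \<longleftrightarrow> tuple_orbit G (hword_act G ?p s) = tuple_orbit G s"
    using s prod_one_tuple_hword_act[OF s, of ?p]
    by (intro tuple_orbit_hword_act_iff) (auto simp: prod_one_tuple_def)
  ultimately show ?thesis
    using Fix4_iff[OF C assms(6)] Fix4_iff[OF C Sigma_tuples_pure_braid[OF assms(3,6,5)]] by simp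
qed

end
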